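(* Let $k\ge 2$ be an integer that is not a prime power. Then there are infinitely many integers $m$ such that $\mathcal F_k^{(m)}$ contains a vertex of level $m$ that is isolated in $\mathcal F_k^{(m)}$.
   Context: The vertex set $V$ consists of all reduced fractions $p/q$ with $p,q\in\mathbb Z$, $\gcd(p,q)=1$, together with $1/0$; here $p/q$ and $(-p)/(-q)$ denote the same vertex. For vertices define $d(p/q,a/b)=|pb-qa|$. The graph $\mathcal F_k$ has vertex set $V$, with an edge between $p/q$ and $a/b$ exactly when $d(p/q,a/b)=k$. The level of a vertex $p/q$ is $\max\{|p|,|q|\}$. For $m\in\mathbb N$, $\mathcal F_k^{(m)}$ is the subgraph of $\mathcal F_k$ induced on the vertices of level at most $m$. A prime power means $p^\ell$ with $p$ prime and $\ell>0$. *)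

theory Defs
  imports Main "HOL-Number_Theory.Number_Theory"
begin

text \<open>A vertex p/q is represented by a pair (p,q) of integers with gcd(p,q) = 1;
  the pairs (p,q) and (-p,-q) represent the same vertex. All notions below are
  invariant under this sign change.\<close>

definition is_vertex :: "int \<times> int \<Rightarrow> bool" where
  "is_vertex v \<longleftrightarrow> coprime (fst v) (snd v)"

definition fdist :: "int \<times> int \<Rightarrow> int \<times> int \<Rightarrow> int" where
  "fdist v w = \<bar>fst v * snd w - snd v * fst w\<bar>"

definition level :: "int \<times> int \<Rightarrow> nat" where
  "level v = nat (max \<bar>fst v\<bar> \<bar>snd v\<bar>)"

definition F_edge :: "nat \<Rightarrow> int \<times> int \<Rightarrow> int \<times> int \<Rightarrow> bool" where
  "F_edge k v w \<longleftrightarrow> is_vertex v \<and> is_vertex w \<and> fdist v w = int k"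

definition isolated_in_Fkm :: "nat \<Rightarrow> nat \<Rightarrow> int \<times> int \<Rightarrow> bool" where
  "isolated_in_Fkm k m v \<longleftrightarrow> is_vertex v \<and> level v \<le> m \<and>
     \<not> (\<exists>w. is_vertex w \<and> level w \<le> m \<and> F_edge k v w)"

end

theory Submission
  imports Defs
begin

text \<open>Since k is not a prime power, k = r s with coprime r, s \<ge> 2. For m = s + r t (t \<ge> 1)
  the vertex m/r has level m. A neighbour a/b in F_k would satisfy m b - r a = \<plusminus>r s
  (up to the sign of the representative); as gcd(r, m) = 1 this forces b = r c and
  a = m c - s. Then c = 0 gives the non-vertex a/0 with |a| = s, c = 1 makes r a common
  divisor of a = m - s and b, and every other c pushes |a| above m.\<close>

lemma coprime_factorization_if_not_primepow:
  fixes k :: nat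
  assumes "k \<ge> 2" and "\<not> primepow k"
  obtains r s where "r \<ge> 2" "s \<ge> 2" "coprime r s" "k = r * s"
proof -
  obtain p where p: "prime p" "p dvd k"
    using prime_factor_nat[of k] assms(1) by auto
  have "k \<noteq> 0" using assms(1) by simp
  have p_not_unit: "\<not> is_unit p" using p(1) by auto
  obtain y where k_eq: "k = p ^ multiplicity p k * y" and "\<not> p dvd y"
    using multiplicity_decompose'[OF \<open>k \<noteq> 0\<close> p_not_unit] by blast
  have mult_pos: "multiplicity p k > 0"
    using \<open>k \<noteq> 0\<close> p p_not_unit by (simp add: multiplicity_gt_zero_iff)
  have "p ^ multiplicity p k \<ge> p ^ 1"
    using mult_pos prime_gt_0_nat[OF p(1)] by (intro power_increasing) auto
  then have "p ^ multiplicity p k \<ge> 2"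
    using prime_ge_2_nat[OF p(1)] by simp
  moreover have "y \<ge> 2"
  proof -
    have "y \<noteq> 0" using k_eq \<open>k \<noteq> 0\<close> by (metis mult_0_right)
    moreover have "y \<noteq> 1"
    proof
      assume "y = 1"
      then have "primepow k"
        using k_eq p(1) mult_pos unfolding primepow_def by auto
      then show False using assms(2) by contradiction
    qed
    ultimately show ?thesis by simp
  qed
  moreover have "coprime (p ^ multiplicity p k) y"
    using p(1) \<open>\<not> p dvd y\<close> by (simp add: prime_imp_coprime)
  ultimately show ?thesis using that k_eq by blast
qed

lemma no_small_coprime_solution:
  fixes r s m a b :: int
  assumes "r \<ge> 2" "s \<ge> 2" "coprime r s" "[m = s] (mod r)" "m > s"
    and "coprime a b" "\<bar>a\<bar> \<le> m" "\<bar>b\<bar> \<le> m"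
  shows "m * b - r * a \<noteq> r * s"
proof
  assume eq: "m * b - r * a = r * s"
  have "coprime r m"
    using assms(3,4) by (simp add: coprime_cong_transfer_right cong_sym)
  moreover have "m * b = r * (a + s)"
    using eq by (simp add: algebra_simps)
  ultimately have "r dvd b"
    by (metis coprime_dvd_mult_right_iff dvd_triv_left)
  then obtain c where b: "b = r * c" ..
  have "r * (m * c - a) = r * s" using eq b by (simp add: algebra_simps)
  hence a: "a = m * c - s" using assms(1) by simp
  consider "c = 0" | "c = 1" | "c \<ge> 2" | "c \<le> -1" by linarith
  then show False
  proof cases
    case 1
    then show False using a b assms(2,6) by simp
  next
    case 2
    have "r dvd a" using a 2 assms(4) by (simp add: cong_iff_dvd_diff)
    moreover have "r dvd b" using b by simp
    ultimately show False using assms(1,6) coprime_common_divisor by fastforce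
  next
    case 3
    have "m * c \<ge> m * 2" using 3 assms(2,5) by (intro mult_left_mono) auto
    then show False using a assms(5,7) by linarith
  next
    case 4
    have "m * c \<le> m * -1" using 4 assms(2,5) by (intro mult_left_mono) auto
    then show False using a assms(2,5,7) by linarith
  qed
qed

lemma fdist_ne_product_if_coprime:
  fixes r s m a b :: int
  assumes "r \<ge> 2" "s \<ge> 2" "coprime r s" "[m = s] (mod r)" "m > s"
    and "coprime a b" "\<bar>a\<bar> \<le> m" "\<bar>b\<bar> \<le> m"
  shows "fdist (m, r) (a, b) \<noteq> r * s"
proof -
  have "m * b - r * a \<noteq> r * s"
    using assms by (rule no_small_coprime_solution)
  moreover have "m * (-b) - r * (-a) \<noteq> r * s"
    using assms(1-5) by (rule no_small_coprime_solution) (use assms(6-8) in auto)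
  ultimately show ?thesis unfolding fdist_def by auto
qed

lemma isolated_vertex_s_plus_r_times:
  fixes r s t :: nat
  assumes "r \<ge> 2" "s \<ge> 2" "coprime r s" "t \<ge> 1"
  defines "m \<equiv> s + r * t"
  shows "level (int m, int r) = m" and "isolated_in_Fkm (r * s) m (int m, int r)"
proof -
  have "r \<le> r * t" using assms(4) by simp
  then have "int r \<le> int m" unfolding m_def by linarith
  then show level: "level (int m, int r) = m"
    unfolding level_def by (simp add: max_absorb1)
  have cong: "[int m = int s] (mod int r)"
    unfolding m_def by (simp add: cong_iff_dvd_diff)
  have "coprime (int r) (int m)"
  proof (rule coprime_cong_transfer_right)
    show "coprime (int r) (int s)" using assms(3) by simp
    show "[int s = int m] (mod int r)" using cong by (rule cong_sym)
  qed
  moreover have "\<not> F_edge (r * s) (int m, int r) (a, b)"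
    if "is_vertex (a, b)" "level (a, b) \<le> m" for a b
  proof -
    have "coprime a b" using that(1) unfolding is_vertex_def by simp
    moreover have "\<bar>a\<bar> \<le> int m" "\<bar>b\<bar> \<le> int m"
      using that(2) unfolding level_def by auto
    moreover have "int m > int s" using \<open>r \<le> r * t\<close> assms(1) unfolding m_def by simp
    ultimately have "fdist (int m, int r) (a, b) \<noteq> int r * int s"
      using assms(1-3) cong by (intro fdist_ne_product_if_coprime) auto
    then show ?thesis unfolding F_edge_def by simp
  qed
  ultimately show "isolated_in_Fkm (r * s) m (int m, int r)"
    unfolding isolated_in_Fkm_def is_vertex_def using level by (auto simp: coprime_commute)
qed

theorem proposition4p9:
  fixes k :: nat
  assumes "k \<ge> 2" and "\<not> primepow k"
  shows "infinite {m :: nat. \<exists>v. level v = m \<and> isolated_in_Fkm k m v}"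
proof -
  obtain r s where "r \<ge> 2" "s \<ge> 2" "coprime r s" and k: "k = r * s"
    using assms by (rule coprime_factorization_if_not_primepow)
  have "range (\<lambda>t. s + r * Suc t) \<subseteq> {m. \<exists>v. level v = m \<and> isolated_in_Fkm k m v}"
  proof (intro image_subsetI CollectI)
    fix t
    have "level (int (s + r * Suc t), int r) = s + r * Suc t"
      "isolated_in_Fkm k (s + r * Suc t) (int (s + r * Suc t), int r)"
      using isolated_vertex_s_plus_r_times[of r s "Suc t"] k \<open>r \<ge> 2\<close> \<open>s \<ge> 2\<close> \<open>coprime r s\<close>
      by simp_all
    then show "\<exists>v. level v = s + r * Suc t \<and> isolated_in_Fkm k (s + r * Suc t) v"
      by blast
  qed
  moreover have "inj (\<lambda>t. s + r * Suc t)"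
    using \<open>r \<ge> 2\<close> by (intro injI) simp
  ultimately show ?thesis
    using range_inj_infinite infinite_super by blast
qed

end
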